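(* Let $T>0$ and ${\bf i}=(i_1,\dots,i_m)$ a reduced word for $w_0$. For every $\pi\in\mathcal C_0([0,T],\mathfrak a)$ the numbers $t_k=1/\int_0^Te^{-\alpha_{i_k}(e^{-\infty}_{s_{i_1}\cdots s_{i_{k-1}}}\pi(s))}ds$, $k=1,\dots,m$, are well defined and positive, so $\varrho^L_{\bf i}(\pi)=(t_1,\dots,t_m)\in\mathbb R_{>0}^m$. Moreover $\pi$ is determined by $(\varrho^L_{\bf i}(\pi),e^{-\infty}_{w_0}\pi)$: if $\pi,\pi'\in\mathcal C_0([0,T],\mathfrak a)$ satisfy $\varrho^L_{\bf i}(\pi)=\varrho^L_{\bf i}(\pi')$ and $e^{-\infty}_{w_0}\pi=e^{-\infty}_{w_0}\pi'$ on $[0,T)$, then $\pi=\pi'$.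
   Context: $\mathfrak a$ is the real Cartan subalgebra of a complex semisimple Lie algebra, $\Delta=\{\alpha_i\}$ the simple roots, $\alpha^\vee$ coroots, $W$ the Weyl group, $w_0$ its longest element. $\mathcal C_0([0,T],\mathfrak a)$: continuous paths with $\pi(0)=0$. For a continuous $\pi:[0,T)\to\mathfrak a$ and $\alpha\in\Delta$, $e^{-\infty}_\alpha\pi(t)=\pi(t)+\log\Big(1-\frac{\int_0^te^{-\alpha(\pi(s))}ds}{\int_0^Te^{-\alpha(\pi(s))}ds}\Big)\alpha^\vee$, $0\le t<T$ (with $e^{-\infty}_\alpha\pi=\pi$ if $\int_0^Te^{-\alpha(\pi)}=\infty$). For $w\in W$ with reduced expression $w=s_{j_1}\cdots s_{j_l}$, $e^{-\infty}_w=e^{-\infty}_{\alpha_{j_l}}\circ\cdots\circ e^{-\infty}_{\alpha_{j_1}}$ (independent of the reduced expression), $e^{-\infty}_e=\mathrm{id}$. *)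

theory Defs
  imports "HOL-Analysis.Analysis"
begin

text \<open>Root datum of a complex semisimple Lie algebra: the real Cartan subalgebra is a
  finite-dimensional real vector space 'a, simple roots are linear functionals
  alpha i (indexed by a finite type 'i), coroots are vectors cv i, and the matrix
  alpha i (cv j) is a generalized Cartan matrix whose Weyl group is finite
  (i.e. a Cartan matrix of finite type).\<close>

definition cartan_datum :: "('i::finite \<Rightarrow> 'a::euclidean_space \<Rightarrow> real) \<Rightarrow> ('i \<Rightarrow> 'a) \<Rightarrow> bool" where
  "cartan_datum \<alpha> cv \<longleftrightarrow>
     (\<forall>i. linear (\<alpha> i)) \<and>
     (\<forall>i. \<alpha> i (cv i) = 2) \<and>
     (\<forall>i j. i \<noteq> j \<longrightarrow> \<alpha> i (cv j) \<in> \<int> \<and> \<alpha> i (cv j) \<le> 0) \<and>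
     (\<forall>i j. \<alpha> i (cv j) = 0 \<longleftrightarrow> \<alpha> j (cv i) = 0) \<and>
     inj cv \<and> independent (range cv) \<and> span (range cv) = UNIV \<and>
     (\<forall>c::'i \<Rightarrow> real. (\<forall>x. (\<Sum>i\<in>UNIV. c i * \<alpha> i x) = 0) \<longrightarrow> (\<forall>i. c i = 0))"

definition sref :: "('i \<Rightarrow> 'a::real_vector \<Rightarrow> real) \<Rightarrow> ('i \<Rightarrow> 'a) \<Rightarrow> 'i \<Rightarrow> 'a \<Rightarrow> 'a" where
  "sref \<alpha> cv j x = x - \<alpha> j x *\<^sub>R cv j"

definition wprod :: "('i \<Rightarrow> 'a::real_vector \<Rightarrow> real) \<Rightarrow> ('i \<Rightarrow> 'a) \<Rightarrow> 'i list \<Rightarrow> 'a \<Rightarrow> 'a" where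
  "wprod \<alpha> cv ws = foldr (\<lambda>j f. sref \<alpha> cv j \<circ> f) ws id"

definition weyl_group :: "('i \<Rightarrow> 'a::real_vector \<Rightarrow> real) \<Rightarrow> ('i \<Rightarrow> 'a) \<Rightarrow> ('a \<Rightarrow> 'a) set" where
  "weyl_group \<alpha> cv = range (wprod \<alpha> cv)"

definition wlen :: "('i \<Rightarrow> 'a::real_vector \<Rightarrow> real) \<Rightarrow> ('i \<Rightarrow> 'a) \<Rightarrow> ('a \<Rightarrow> 'a) \<Rightarrow> nat" where
  "wlen \<alpha> cv w = (LEAST n. \<exists>ws. length ws = n \<and> wprod \<alpha> cv ws = w)"

text \<open>A reduced word for the longest element w0: a reduced word (length equals the
  Weyl length of its product) whose product has maximal length in W.\<close>
definition reduced_word_w0 :: "('i \<Rightarrow> 'a::real_vector \<Rightarrow> real) \<Rightarrow> ('i \<Rightarrow> 'a) \<Rightarrow> 'i list \<Rightarrow> bool" where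
  "reduced_word_w0 \<alpha> cv is \<longleftrightarrow>
     length is = wlen \<alpha> cv (wprod \<alpha> cv is) \<and>
     (\<forall>w\<in>weyl_group \<alpha> cv. wlen \<alpha> cv w \<le> length is)"

definition Dint :: "('i \<Rightarrow> 'a \<Rightarrow> real) \<Rightarrow> real \<Rightarrow> 'i \<Rightarrow> (real \<Rightarrow> 'a) \<Rightarrow> ennreal" where
  "Dint \<alpha> T j p = (\<integral>\<^sup>+ s. ennreal (indicator {0..<T} s * exp (- \<alpha> j (p s))) \<partial>lborel)"

text \<open>The operator e^{-infinity}_{alpha_j} on paths [0,T) -> a (values for t >= T irrelevant).\<close>
definition eminf :: "('i \<Rightarrow> 'a::real_vector \<Rightarrow> real) \<Rightarrow> ('i \<Rightarrow> 'a) \<Rightarrow> real \<Rightarrow> 'i \<Rightarrow> (real \<Rightarrow> 'a) \<Rightarrow> real \<Rightarrow> 'a" where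
  "eminf \<alpha> cv T j p = (\<lambda>t.
     if Dint \<alpha> T j p = \<infinity> then p t
     else p t + ln (1 - integral {0..t} (\<lambda>s. exp (- \<alpha> j (p s))) / enn2real (Dint \<alpha> T j p)) *\<^sub>R cv j)"

text \<open>e^{-infinity}_w for the word ws = [j1,...,jl] of w = s_{j1}...s_{jl}:
  e_{alpha_{jl}} o ... o e_{alpha_{j1}}.\<close>
definition epath :: "('i \<Rightarrow> 'a::real_vector \<Rightarrow> real) \<Rightarrow> ('i \<Rightarrow> 'a) \<Rightarrow> real \<Rightarrow> 'i list \<Rightarrow> (real \<Rightarrow> 'a) \<Rightarrow> real \<Rightarrow> 'a" where
  "epath \<alpha> cv T ws p = fold (eminf \<alpha> cv T) ws p"

text \<open>The k-th integral (k = 0..m-1, 0-based) and the map rho^L_i.\<close>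
definition Dk :: "('i \<Rightarrow> 'a::real_vector \<Rightarrow> real) \<Rightarrow> ('i \<Rightarrow> 'a) \<Rightarrow> real \<Rightarrow> 'i list \<Rightarrow> (real \<Rightarrow> 'a) \<Rightarrow> nat \<Rightarrow> ennreal" where
  "Dk \<alpha> cv T is p k = Dint \<alpha> T (is ! k) (epath \<alpha> cv T (take k is) p)"

definition rhoL :: "('i \<Rightarrow> 'a::real_vector \<Rightarrow> real) \<Rightarrow> ('i \<Rightarrow> 'a) \<Rightarrow> real \<Rightarrow> 'i list \<Rightarrow> (real \<Rightarrow> 'a) \<Rightarrow> real list" where
  "rhoL \<alpha> cv T is p = map (\<lambda>k. 1 / enn2real (Dk \<alpha> cv T is p k)) [0..<length is]"

end

theory Submission
  imports Defs
begin

text \<open>Write \<open>w\<^sub>k = s\<^bsub>i\<^sub>1\<^esub> \<cdots> s\<^bsub>i\<^sub>k\<^esub>\<close> and \<open>\<pi>\<^sub>k = e\<^sup>-\<^sup>\<infinity>\<^bsub>w\<^sub>k\<^esub> \<pi>\<close>, and fix \<open>\<rho>\<close> with \<open>\<alpha>\<^sub>i(\<rho>) = 1\<close> for all \<open>i\<close>.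
  By induction on \<open>k\<close>, \<open>\<pi>\<^sub>k(t) = ln(T - t) (\<rho> - w\<^sub>k\<^sup>-\<^sup>1 \<rho>) + O(1)\<close> as \<open>t \<rightarrow> T\<close>. Since the word is
  reduced, \<open>\<alpha>\<^bsub>i\<^bsub>k+1\<^esub>\<^esub> \<circ> w\<^sub>k\<^sup>-\<^sup>1\<close> is a positive root (Tits' lemma, reduced to rank two), so
  \<open>a = \<alpha>\<^bsub>i\<^bsub>k+1\<^esub>\<^esub>(\<rho> - w\<^sub>k\<^sup>-\<^sup>1 \<rho>) < 1\<close> and \<open>exp(-\<alpha>\<^bsub>i\<^bsub>k+1\<^esub>\<^esub>(\<pi>\<^sub>k))\<close> is comparable to \<open>(T - t)\<^sup>-\<^sup>a\<close>:
  the integral defining \<open>t\<^bsub>k+1\<^esub>\<close> is finite and positive, and \<open>\<pi>\<^bsub>k+1\<^esub>\<close> again has logarithmic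
  growth. Conversely \<open>e\<^sup>-\<^sup>\<infinity>\<^sub>\<alpha>\<close> is injective on paths with a prescribed integral, so \<open>\<pi>\<close> is
  recovered from \<open>e\<^sup>-\<^sup>\<infinity>\<^bsub>w\<^sub>0\<^esub> \<pi>\<close> and \<open>\<rho>\<^sup>L(\<pi>)\<close> by undoing the operators one at a time.\<close>

section \<open>Integrals near a logarithmic singularity\<close>

definition log_growth :: "real \<Rightarrow> 'a::real_normed_vector \<Rightarrow> (real \<Rightarrow> 'a) \<Rightarrow> bool" where
  "log_growth T \<mu> p \<longleftrightarrow> (\<exists>B. \<forall>t\<in>{0..<T}. norm (p t - ln (T - t) *\<^sub>R \<mu>) \<le> B)"

lemma powr_has_integral_to_endpoint:
  fixes a T t :: real
  assumes a: "a < 1" and t: "t < T"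
  shows "((\<lambda>s. (T - s) powr (-a)) has_integral (T - t) powr (1 - a) / (1 - a)) {t..<T}"
proof -
  define H where "H s = - ((T - s) powr (1 - a)) / (1 - a)" for s
  have cont: "continuous_on {t..T} H"
    unfolding H_def using a by (intro continuous_intros continuous_on_powr') auto
  have "(H has_real_derivative (T - s) powr (-a)) (at s)" if "s \<in> {t<..<T}" for s
  proof -
    have "(H has_real_derivative - ((1 - a) * (T - s) powr (1 - a - 1) * (-1)) / (1 - a)) (at s)"
      unfolding H_def using that by (auto intro!: derivative_eq_intros)
    then show ?thesis using a by simp
  qed
  then have "((\<lambda>s. (T - s) powr (-a)) has_integral (H T - H t)) {t..T}"
    using fundamental_theorem_of_calculus_interior[OF _ cont] t
    by (simp add: has_real_derivative_iff_has_vector_derivative)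
  moreover have "H T - H t = (T - t) powr (1 - a) / (1 - a)" unfolding H_def by simp
  ultimately show ?thesis
    by (subst has_integral_spike_set_eq[where T="{t..T}"])
       (auto intro: negligible_subset[of "{T}"])
qed

lemma continuous_on_integral_atLeastLessThan:
  fixes g :: "real \<Rightarrow> 'b::banach"
  assumes "g integrable_on {a..<b}"
  shows "continuous_on {a..<b} (\<lambda>t. integral {a..t} g)"
proof -
  have "g integrable_on {a..b}"
    by (rule integrable_spike_set[OF assms]) (auto intro: negligible_subset[of "{b}"])
  then show ?thesis
    by (rule continuous_on_subset[OF indefinite_integral_continuous_1]) auto
qed

lemma exp_neg_integral_near_log_singularity:
  fixes q :: "real \<Rightarrow> real"
  assumes cont: "continuous_on {0..<T} q"
    and bnd: "\<forall>s\<in>{0..<T}. \<bar>q s - a * ln (T - s)\<bar> \<le> C" and a: "a < 1"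
    and t: "0 \<le> t" "t < T"
  shows "(\<lambda>s. exp (- q s)) integrable_on {t..<T}"
    and "exp (- C) * ((T - t) powr (1 - a) / (1 - a)) \<le> integral {t..<T} (\<lambda>s. exp (- q s))"
    and "integral {t..<T} (\<lambda>s. exp (- q s)) \<le> exp C * ((T - t) powr (1 - a) / (1 - a))"
proof -
  define g where "g s = exp (- q s)" for s
  define h where "h s = (T - s) powr (- a)" for s
  have h_int: "(h has_integral (T - t) powr (1 - a) / (1 - a)) {t..<T}"
    unfolding h_def using powr_has_integral_to_endpoint[OF a t(2)] .
  have g_bounds: "exp (- C) * h s \<le> g s \<and> g s \<le> exp C * h s" if s: "s \<in> {t..<T}" for s
  proof -
    have "g s = exp (- (q s - a * ln (T - s))) * h s"
      using s by (simp add: g_def h_def powr_def exp_add[symmetric])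
    moreover have "\<bar>q s - a * ln (T - s)\<bar> \<le> C" using bnd s t by auto
    ultimately show ?thesis by (simp add: h_def mult_right_mono)
  qed
  have g_cont: "continuous_on {t..<T} g"
    unfolding g_def using cont t by (auto intro!: continuous_intros intro: continuous_on_subset)
  show g_int: "(\<lambda>s. exp (- q s)) integrable_on {t..<T}"
    unfolding g_def[symmetric]
  proof (rule measurable_bounded_by_integrable_imp_integrable_real)
    show "g \<in> borel_measurable (lebesgue_on {t..<T})"
      by (rule continuous_imp_measurable_on_sets_lebesgue[OF g_cont]) auto
    show "(\<lambda>s. exp C * h s) integrable_on {t..<T}"
      using has_integral_mult_right[OF h_int] by blast
    show "\<bar>g s\<bar> \<le> exp C * h s" if "s \<in> {t..<T}" for s
      using g_bounds[OF that] by (simp add: g_def)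
  qed auto
  show "exp (- C) * ((T - t) powr (1 - a) / (1 - a)) \<le> integral {t..<T} (\<lambda>s. exp (- q s))"
    using g_bounds g_def by (intro has_integral_le[OF has_integral_mult_right[OF h_int]
        g_int[unfolded has_integral_integral]]) auto
  show "integral {t..<T} (\<lambda>s. exp (- q s)) \<le> exp C * ((T - t) powr (1 - a) / (1 - a))"
    using g_bounds g_def by (intro has_integral_le[OF g_int[unfolded has_integral_integral]
        has_integral_mult_right[OF h_int]]) auto
qed

lemma abs_ln_diff_le_if_between_exp:
  fixes h x C :: real
  assumes "0 < h" "exp (- C) * h \<le> x" "x \<le> exp C * h"
  shows "\<bar>ln x - ln h\<bar> \<le> C"
proof -
  have "0 < exp (- C) * h" using assms(1) by simp
  then have "0 < x" using assms(2) by linarith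
  then have "ln (exp (- C) * h) \<le> ln x" "ln x \<le> ln (exp C * h)"
    using assms by (simp_all add: ln_le_cancel_iff)
  then show ?thesis using assms(1) by (simp add: ln_mult)
qed

lemma integral_atLeastAtMost_add_atLeastLessThan:
  fixes g :: "real \<Rightarrow> 'b::banach"
  assumes "g integrable_on {a..t}" "g integrable_on {t..<b}" "a \<le> t" "t < b"
  shows "integral {a..t} g + integral {t..<b} g = integral {a..<b} g"
proof -
  have "(g has_integral (integral {a..t} g + integral {t..<b} g)) ({a..t} \<union> {t..<b})"
    using assms by (intro has_integral_Un) (auto intro: negligible_subset[of "{t}"])
  moreover have "{a..t} \<union> {t..<b} = {a..<b}" using assms(3,4) by auto
  ultimately show ?thesis by (simp add: integral_unique)
qed

lemma ln_remaining_integral_asymptotic: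
  fixes q :: "real \<Rightarrow> real"
  assumes T: "0 < T" and cont: "continuous_on {0..<T} q"
    and bnd: "\<forall>s\<in>{0..<T}. \<bar>q s - a * ln (T - s)\<bar> \<le> C" and a: "a < 1"
  shows "\<exists>D E. ((\<lambda>s. exp (- q s)) has_integral D) {0..<T} \<and> 0 < D \<and>
    (\<forall>t\<in>{0..<T}. integral {0..t} (\<lambda>s. exp (- q s)) < D \<and>
       \<bar>ln (1 - integral {0..t} (\<lambda>s. exp (- q s)) / D) - (1 - a) * ln (T - t)\<bar> \<le> E)"
proof -
  define g where "g s = exp (- q s)" for s
  define I where "I t = integral {t..<T} g" for t
  define D where "D = I 0"
  note tail = exp_neg_integral_near_log_singularity[OF cont bnd a, folded g_def]
  have ln_I: "\<bar>ln (I t) - ((1 - a) * ln (T - t) - ln (1 - a))\<bar> \<le> C" and I_pos: "0 < I t"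
    if t: "0 \<le> t" "t < T" for t
  proof -
    define h where "h = (T - t) powr (1 - a) / (1 - a)"
    have h: "0 < h" "ln h = (1 - a) * ln (T - t) - ln (1 - a)"
      unfolding h_def using t a by (simp_all add: ln_div)
    have bounds: "exp (- C) * h \<le> I t" "I t \<le> exp C * h"
      using tail(2,3)[OF t] unfolding I_def h_def by simp_all
    show "0 < I t" using h(1) bounds(1) by (smt (verit) exp_gt_zero mult_pos_pos)
    show "\<bar>ln (I t) - ((1 - a) * ln (T - t) - ln (1 - a))\<bar> \<le> C"
      using abs_ln_diff_le_if_between_exp[OF h(1) bounds] h(2) by simp
  qed
  have D_int: "(g has_integral D) {0..<T}"
    unfolding D_def I_def using tail(1)[of 0] T by auto
  have split: "integral {0..t} g + I t = D" if t: "0 \<le> t" "t < T" for t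
  proof -
    have "g integrable_on {0..t}"
      unfolding g_def using cont t
      by (auto intro!: integrable_continuous_interval continuous_intros intro: continuous_on_subset)
    then show ?thesis
      using integral_atLeastAtMost_add_atLeastLessThan[OF _ tail(1)[OF t] t] unfolding I_def D_def
      by simp
  qed
  define E where "E = C + \<bar>ln (1 - a)\<bar> + \<bar>ln D\<bar>"
  have "0 < D" unfolding D_def using I_pos[of 0] T by simp
  moreover have "integral {0..t} g < D \<and> \<bar>ln (1 - integral {0..t} g / D) - (1 - a) * ln (T - t)\<bar> \<le> E"
    if t: "0 \<le> t" "t < T" for t
  proof
    show "integral {0..t} g < D" using split[OF t] I_pos[OF t] by simp
    have "ln (1 - integral {0..t} g / D) = ln (I t) - ln D"
      using split[OF t] I_pos[OF t] \<open>0 < D\<close> by (simp add: ln_div field_simps)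
    then show "\<bar>ln (1 - integral {0..t} g / D) - (1 - a) * ln (T - t)\<bar> \<le> E"
      using ln_I[OF t] unfolding E_def by linarith
  qed
  ultimately show ?thesis
    using D_int unfolding g_def by (intro exI[of _ D] exI[of _ E]) auto
qed

lemma log_growth_linear_image:
  fixes f :: "'a::euclidean_space \<Rightarrow> real"
  assumes "linear f" and "log_growth T \<mu> p"
  shows "\<exists>C. \<forall>s\<in>{0..<T}. \<bar>f (p s) - f \<mu> * ln (T - s)\<bar> \<le> C"
proof -
  obtain B where B: "\<forall>s\<in>{0..<T}. norm (p s - ln (T - s) *\<^sub>R \<mu>) \<le> B"
    using assms(2) unfolding log_growth_def by blast
  obtain K where K: "0 < K" "\<And>x. norm (f x) \<le> norm x * K"
    using assms(1) linear_conv_bounded_linear bounded_linear.pos_bounded by blast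
  have "\<bar>f (p s) - f \<mu> * ln (T - s)\<bar> \<le> B * K" if "s \<in> {0..<T}" for s
  proof -
    have "\<bar>f (p s) - f \<mu> * ln (T - s)\<bar> = norm (f (p s - ln (T - s) *\<^sub>R \<mu>))"
      using linear_diff[OF assms(1)] linear_scale[OF assms(1)] by (simp add: mult.commute)
    also have "\<dots> \<le> norm (p s - ln (T - s) *\<^sub>R \<mu>) * K" by (rule K)
    also have "\<dots> \<le> B * K" using B that K(1) by (simp add: mult_right_mono)
    finally show ?thesis .
  qed
  then show ?thesis by blast
qed

section \<open>The operators \<open>e\<^sup>-\<^sup>\<infinity>\<^sub>\<alpha>\<close>\<close>

lemma eminf_if_Dint_finite:
  assumes "Dint \<alpha> T j p = ennreal D" and "0 < D"
  shows "eminf \<alpha> cv T j p =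
    (\<lambda>t. p t + ln (1 - integral {0..t} (\<lambda>s. exp (- \<alpha> j (p s))) / D) *\<^sub>R cv j)"
  using assms by (simp add: eminf_def)

lemma eminf_log_growth:
  fixes \<alpha> :: "'i \<Rightarrow> 'a::euclidean_space \<Rightarrow> real" and p :: "real \<Rightarrow> 'a"
  assumes T: "0 < T" and lin: "linear (\<alpha> j)" and cont: "continuous_on {0..<T} p"
    and growth: "log_growth T \<mu> p" and a: "\<alpha> j \<mu> < 1"
  shows "\<exists>D>0. Dint \<alpha> T j p = ennreal D \<and>
      (\<forall>t\<in>{0..<T}. integral {0..t} (\<lambda>s. exp (- \<alpha> j (p s))) < D) \<and>
      continuous_on {0..<T} (eminf \<alpha> cv T j p) \<and>
      log_growth T (\<mu> + (1 - \<alpha> j \<mu>) *\<^sub>R cv j) (eminf \<alpha> cv T j p)"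
proof -
  define F where "F t = integral {0..t} (\<lambda>s. exp (- \<alpha> j (p s)))" for t
  obtain C where C: "\<forall>s\<in>{0..<T}. \<bar>\<alpha> j (p s) - \<alpha> j \<mu> * ln (T - s)\<bar> \<le> C"
    using log_growth_linear_image[OF lin growth] by blast
  obtain D E where D_int: "((\<lambda>s. exp (- \<alpha> j (p s))) has_integral D) {0..<T}" and D: "0 < D"
    and FD: "\<forall>t\<in>{0..<T}. F t < D \<and> \<bar>ln (1 - F t / D) - (1 - \<alpha> j \<mu>) * ln (T - t)\<bar> \<le> E"
    using ln_remaining_integral_asymptotic[OF T linear_continuous_on_compose[OF cont lin] C a]
    unfolding F_def by blast
  have Dint: "Dint \<alpha> T j p = ennreal D"
    unfolding Dint_def using nn_integral_has_integral_lebesgue[OF _ D_int] by simp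
  have em: "eminf \<alpha> cv T j p = (\<lambda>t. p t + ln (1 - F t / D) *\<^sub>R cv j)"
    unfolding F_def by (rule eminf_if_Dint_finite[OF Dint D])
  have "continuous_on {0..<T} F"
    unfolding F_def using D_int by (intro continuous_on_integral_atLeastLessThan) blast
  moreover have "\<forall>t\<in>{0..<T}. 0 < 1 - F t / D" using FD D by simp
  ultimately have "continuous_on {0..<T} (eminf \<alpha> cv T j p)"
    unfolding em using D by (intro continuous_intros cont) auto
  moreover have "norm (eminf \<alpha> cv T j p t - ln (T - t) *\<^sub>R (\<mu> + (1 - \<alpha> j \<mu>) *\<^sub>R cv j))
      \<le> B + E * norm (cv j)"
    if B: "\<forall>t\<in>{0..<T}. norm (p t - ln (T - t) *\<^sub>R \<mu>) \<le> B" and t: "t \<in> {0..<T}" for B t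
  proof -
    have "eminf \<alpha> cv T j p t - ln (T - t) *\<^sub>R (\<mu> + (1 - \<alpha> j \<mu>) *\<^sub>R cv j)
        = (p t - ln (T - t) *\<^sub>R \<mu>) + (ln (1 - F t / D) - (1 - \<alpha> j \<mu>) * ln (T - t)) *\<^sub>R cv j"
      unfolding em by (simp add: algebra_simps)
    also have "norm \<dots> \<le> norm (p t - ln (T - t) *\<^sub>R \<mu>)
        + \<bar>ln (1 - F t / D) - (1 - \<alpha> j \<mu>) * ln (T - t)\<bar> * norm (cv j)"
      by (rule norm_triangle_le) simp
    also have "\<dots> \<le> B + E * norm (cv j)"
      using B FD t by (intro add_mono mult_right_mono) auto
    finally show ?thesis .
  qed
  then have "log_growth T (\<mu> + (1 - \<alpha> j \<mu>) *\<^sub>R cv j) (eminf \<alpha> cv T j p)"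
    using growth unfolding log_growth_def by blast
  ultimately show ?thesis using D Dint FD unfolding F_def by auto
qed

lemma inverse_remaining_mass_has_derivative:
  fixes q :: "real \<Rightarrow> real" and D :: real
  defines "u \<equiv> \<lambda>x. 1 - integral {0..x} (\<lambda>s. exp (- q s)) / D"
  assumes cont: "continuous_on {0..<T} q" and D: "0 < D"
    and less: "\<forall>t\<in>{0..<T}. integral {0..t} (\<lambda>s. exp (- q s)) < D"
    and t0: "t0 \<in> {0..<T}" and x: "x \<in> {0..t0}"
  shows "((\<lambda>x. inverse (u x)) has_field_derivative exp (- (q x + 2 * ln (u x))) / D)
    (at x within {0..t0})"
proof -
  have "continuous_on {0..t0} (\<lambda>s. exp (- q s))"
    using cont t0 by (auto intro!: continuous_intros intro: continuous_on_subset)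
  from integral_has_vector_derivative[OF this x]
  have "((\<lambda>x. integral {0..x} (\<lambda>s. exp (- q s))) has_field_derivative exp (- q x))
      (at x within {0..t0})"
    by (simp add: has_real_derivative_iff_has_vector_derivative)
  then have du: "(u has_field_derivative - exp (- q x) / D) (at x within {0..t0})"
    unfolding u_def using D by (auto intro!: derivative_eq_intros)
  have ux: "0 < u x" using less t0 x D unfolding u_def by auto
  have "((\<lambda>x. inverse (u x)) has_field_derivative
      - (inverse (u x) * (- exp (- q x) / D) * inverse (u x))) (at x within {0..t0})"
    by (rule DERIV_inverse'[OF du]) (use ux in simp)
  moreover have "- (inverse (u x) * (- exp (- q x) / D) * inverse (u x))
      = exp (- (q x + 2 * ln (u x))) / D"
  proof -
    have "exp (2 * ln (u x)) = u x * u x" using ux by (simp only: mult_2 exp_add exp_ln)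
    then have "exp (- (q x + 2 * ln (u x))) = exp (- q x) / (u x * u x)"
      by (simp add: exp_diff)
    then show ?thesis by (simp add: divide_inverse)
  qed
  ultimately show ?thesis by (rule DERIV_cong)
qed

lemma remaining_mass_eq_if_exponents_eq:
  fixes q q' :: "real \<Rightarrow> real" and D :: real
  defines "u \<equiv> \<lambda>x. 1 - integral {0..x} (\<lambda>s. exp (- q s)) / D"
    and "u' \<equiv> \<lambda>x. 1 - integral {0..x} (\<lambda>s. exp (- q' s)) / D"
  assumes cont: "continuous_on {0..<T} q" and cont': "continuous_on {0..<T} q'" and D: "0 < D"
    and less: "\<forall>t\<in>{0..<T}. integral {0..t} (\<lambda>s. exp (- q s)) < D"
    and less': "\<forall>t\<in>{0..<T}. integral {0..t} (\<lambda>s. exp (- q' s)) < D"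
    and same: "\<forall>x\<in>{0..<T}. q x + 2 * ln (u x) = q' x + 2 * ln (u' x)"
    and t0: "t0 \<in> {0..<T}"
  shows "u t0 = u' t0"
proof -
  have "((\<lambda>x. inverse (u x) - inverse (u' x)) has_field_derivative 0) (at x within {0..t0})"
    if x: "x \<in> {0..t0}" for x
  proof (rule DERIV_cong[OF DERIV_diff])
    show "((\<lambda>x. inverse (u x)) has_field_derivative exp (- (q x + 2 * ln (u x))) / D)
        (at x within {0..t0})"
      unfolding u_def by (rule inverse_remaining_mass_has_derivative[OF cont D less t0 x])
    show "((\<lambda>x. inverse (u' x)) has_field_derivative exp (- (q' x + 2 * ln (u' x))) / D)
        (at x within {0..t0})"
      unfolding u'_def by (rule inverse_remaining_mass_has_derivative[OF cont' D less' t0 x])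
    show "exp (- (q x + 2 * ln (u x))) / D - exp (- (q' x + 2 * ln (u' x))) / D = 0"
      using same x t0 by simp
  qed
  then obtain c where c: "\<forall>x\<in>{0..t0}. inverse (u x) - inverse (u' x) = c"
    using has_field_derivative_zero_constant[of "{0..t0}"] by blast
  moreover have "u 0 = 1" "u' 0 = 1" unfolding u_def u'_def by simp_all
  ultimately have "inverse (u t0) - inverse (u' t0) = inverse (u 0) - inverse (u' 0)"
    using t0 by (metis atLeastAtMost_iff atLeastLessThan_iff order_refl)
  then show "u t0 = u' t0" using \<open>u 0 = 1\<close> \<open>u' 0 = 1\<close> by simp
qed

text \<open>Since \<open>\<alpha>\<^sub>j(cv j) = 2\<close>, the path \<open>e p = p + (ln u) cv j\<close> satisfies
  \<open>\<alpha>\<^sub>j (e p) = \<alpha>\<^sub>j p + 2 ln u\<close>, so \<open>(1/u)' = exp(-\<alpha>\<^sub>j (e p)) / D\<close>: the remaining mass \<open>u\<close>,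
  and with it \<open>p\<close>, is recovered from \<open>e p\<close> and \<open>D\<close>.\<close>

lemma eminf_eq_imp_eq:
  fixes \<alpha> :: "'i \<Rightarrow> 'a::euclidean_space \<Rightarrow> real" and p p' :: "real \<Rightarrow> 'a"
  assumes lin: "linear (\<alpha> j)" and ajj: "\<alpha> j (cv j) = 2"
    and cont: "continuous_on {0..<T} p" and cont': "continuous_on {0..<T} p'" and D: "0 < D"
    and Dint: "Dint \<alpha> T j p = ennreal D" and Dint': "Dint \<alpha> T j p' = ennreal D"
    and less: "\<forall>t\<in>{0..<T}. integral {0..t} (\<lambda>s. exp (- \<alpha> j (p s))) < D"
    and less': "\<forall>t\<in>{0..<T}. integral {0..t} (\<lambda>s. exp (- \<alpha> j (p' s))) < D"
    and eq: "\<forall>t\<in>{0..<T}. eminf \<alpha> cv T j p t = eminf \<alpha> cv T j p' t"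
  shows "\<forall>t\<in>{0..<T}. p t = p' t"
proof
  fix t0 assume t0: "t0 \<in> {0..<T}"
  define u where "u x = 1 - integral {0..x} (\<lambda>s. exp (- \<alpha> j (p s))) / D" for x
  define u' where "u' x = 1 - integral {0..x} (\<lambda>s. exp (- \<alpha> j (p' s))) / D" for x
  have e: "p x + ln (u x) *\<^sub>R cv j = p' x + ln (u' x) *\<^sub>R cv j" if "x \<in> {0..<T}" for x
    using eq that
    unfolding eminf_if_Dint_finite[OF Dint D] eminf_if_Dint_finite[OF Dint' D] u_def u'_def
    by simp
  have "\<forall>x\<in>{0..<T}. \<alpha> j (p x) + 2 * ln (u x) = \<alpha> j (p' x) + 2 * ln (u' x)"
    using arg_cong[OF e, of _ "\<alpha> j"] linear_add[OF lin] linear_scale[OF lin] ajj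
    by (simp add: mult.commute)
  then have "u t0 = u' t0"
    unfolding u_def u'_def
    by (rule remaining_mass_eq_if_exponents_eq[OF linear_continuous_on_compose[OF cont lin]
          linear_continuous_on_compose[OF cont' lin] D less less' _ t0])
  then show "p t0 = p' t0" using e[OF t0] by simp
qed

section \<open>Words in the simple reflections\<close>

locale reflection_datum =
  fixes \<alpha> :: "'i \<Rightarrow> 'a::real_vector \<Rightarrow> real" and cv :: "'i \<Rightarrow> 'a"
  assumes linear_alpha: "\<And>i. linear (\<alpha> i)" and alpha_coroot_self: "\<And>i. \<alpha> i (cv i) = 2"
begin

abbreviation s where "s \<equiv> sref \<alpha> cv"
abbreviation wp where "wp \<equiv> wprod \<alpha> cv"
abbreviation wl where "wl \<equiv> wlen \<alpha> cv"

lemma alpha_add: "\<alpha> i (x + y) = \<alpha> i x + \<alpha> i y"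
  using linear_alpha by (rule linear_add)

lemma alpha_diff: "\<alpha> i (x - y) = \<alpha> i x - \<alpha> i y"
  using linear_alpha by (rule linear_diff)

lemma alpha_scale: "\<alpha> i (c *\<^sub>R x) = c * \<alpha> i x"
  using linear_scale[OF linear_alpha] by simp

lemma alpha_sref: "\<alpha> k (s i y) = \<alpha> k y - \<alpha> i y * \<alpha> k (cv i)"
  by (simp add: sref_def alpha_diff alpha_scale)

lemma sref_sref [simp]: "s j (s j x) = x"
  by (simp add: sref_def alpha_diff alpha_scale alpha_coroot_self algebra_simps)

lemma sref_comp_sref [simp]: "s j \<circ> (s j \<circ> f) = f"
  by (rule ext) simp

lemma sref_comp_eq_iff: "s j \<circ> f = g \<longleftrightarrow> f = s j \<circ> g"
  by (metis sref_comp_sref)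

lemma wp_Nil [simp]: "wp [] = id"
  by (simp add: wprod_def)

lemma wp_Cons [simp]: "wp (j # ws) = s j \<circ> wp ws"
  by (simp add: wprod_def)

lemma wp_append: "wp (xs @ ys) = wp xs \<circ> wp ys"
  by (induction xs) auto

lemma wp_rev_wp [simp]: "wp (rev ws) (wp ws x) = x"
  by (induction ws arbitrary: x) (auto simp: wp_append)

lemma wp_wp_rev [simp]: "wp ws (wp (rev ws) x) = x"
  using wp_rev_wp[of "rev ws"] by simp

lemma wl_le_length: "wp zs = w \<Longrightarrow> wl w \<le> length zs"
  unfolding wlen_def by (rule Least_le) auto

lemma wl_attained: obtains zs where "length zs = wl (wp ws)" "wp zs = wp ws"
  using LeastI_ex[of "\<lambda>n. \<exists>zs. length zs = n \<and> wp zs = wp ws"] unfolding wlen_def by blast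

lemma wl_rev: "wl (wp (rev ws)) = wl (wp ws)"
proof -
  have le: "wl (wp (rev ws)) \<le> wl (wp ws)" for ws
  proof -
    obtain zs where zs: "length zs = wl (wp ws)" "wp zs = wp ws" by (rule wl_attained)
    have "wp (rev zs) = wp (rev ws)"
      using wp_rev_wp[of zs "wp (rev ws) x" for x] zs(2) by fastforce
    then show ?thesis using wl_le_length[of "rev zs"] zs(1) by simp
  qed
  show ?thesis using le[of ws] le[of "rev ws"] by simp
qed

lemma wl_take_reduced:
  assumes "length ws = wl (wp ws)" "k \<le> length ws"
  shows "wl (wp (take k ws)) = k"
proof -
  obtain zs where zs: "length zs = wl (wp (take k ws))" "wp zs = wp (take k ws)"
    by (rule wl_attained)
  have "wp (zs @ drop k ws) = wp ws" using zs(2) by (metis append_take_drop_id wp_append)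
  then have "length ws \<le> length zs + (length ws - k)"
    using wl_le_length[of "zs @ drop k ws"] assms(1) by simp
  then show ?thesis using zs(1) wl_le_length[of "take k ws"] assms(2) by simp
qed

end

section \<open>Rank two\<close>

fun alt_word :: "'i \<Rightarrow> 'i \<Rightarrow> nat \<Rightarrow> 'i list" where
  "alt_word i j 0 = []"
| "alt_word i j (Suc k) = i # alt_word j i k"

lemma length_alt_word [simp]: "length (alt_word i j k) = k"
  by (induction k arbitrary: i j) auto

lemma set_alt_word: "set (alt_word i j k) \<subseteq> {i, j}"
  by (induction k arbitrary: i j) auto

lemma take_alt_word: "m \<le> k \<Longrightarrow> take m (alt_word i j k) = alt_word i j m"
proof (induction m arbitrary: i j k)
  case (Suc m)
  then show ?case by (cases k) auto
qed simp

lemma alt_word_if_successively_neq: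
  assumes "set xs \<subseteq> {i, j}" and "successively (\<noteq>) xs" and "xs \<noteq> [] \<longrightarrow> hd xs = i"
  shows "xs = alt_word i j (length xs)"
  using assms
proof (induction xs arbitrary: i j)
  case (Cons x xs)
  have "xs = alt_word j i (length xs)"
  proof (rule Cons.IH)
    show "xs \<noteq> [] \<longrightarrow> hd xs = j"
      using Cons.prems by (cases xs) (auto simp: successively_Cons)
  qed (use Cons.prems in \<open>auto simp: successively_Cons\<close>)
  then show ?case using Cons.prems by simp
qed simp

text \<open>The coefficients of \<open>(s\<^sub>i s\<^sub>j)\<^sup>k (cv i)\<close> in the basis \<open>cv i, cv j\<close>, where
  \<open>A = \<alpha>\<^sub>i(cv j)\<close> and \<open>B = \<alpha>\<^sub>j(cv i)\<close>.\<close>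

fun rotation_coeffs :: "real \<Rightarrow> real \<Rightarrow> nat \<Rightarrow> real \<times> real" where
  "rotation_coeffs A B 0 = (1, 0)"
| "rotation_coeffs A B (Suc k) =
    (let (p, q) = rotation_coeffs A B k; q' = - q - p * B in (- p - q' * A, q'))"

lemma rotation_coeffs_invariant:
  assumes "A \<le> 0" "B \<le> 0" "4 \<le> A * B"
  shows "0 \<le> snd (rotation_coeffs A B k) \<and> 2 * snd (rotation_coeffs A B k) < - B * fst (rotation_coeffs A B k)"
proof (induction k)
  case 0
  have "B \<noteq> 0" using assms by auto
  then show ?case using assms by simp
next
  case (Suc k)
  obtain p q where pq: "rotation_coeffs A B k = (p, q)" by fastforce
  define q' where "q' = - q - p * B"
  have q: "0 \<le> q" "2 * q < - B * p" using Suc pq by simp_all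
  then have "q < q'" unfolding q'_def by (simp add: mult.commute)
  moreover have "0 \<le> A * B * q' - 4 * q'" using assms q \<open>q < q'\<close> by simp
  moreover have "- B * (- p - q' * A) = A * B * q' - (q' + q)"
    unfolding q'_def by (simp add: algebra_simps)
  ultimately have "0 \<le> q' \<and> 2 * q' < - B * (- p - q' * A)"
    using q by linarith
  then show ?case using pq unfolding q'_def by (simp add: Let_def)
qed

lemma strict_mono_snd_rotation_coeffs:
  assumes "A \<le> 0" "B \<le> 0" "4 \<le> A * B"
  shows "strict_mono (\<lambda>k. snd (rotation_coeffs A B k))"
proof (rule strict_monoI_Suc)
  fix k
  obtain p q where pq: "rotation_coeffs A B k = (p, q)" by fastforce
  have "0 \<le> q" "2 * q < - B * p" using rotation_coeffs_invariant[OF assms, of k] pq by simp_all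
  then have "q < - q - p * B" by (simp add: mult.commute)
  then show "snd (rotation_coeffs A B k) < snd (rotation_coeffs A B (Suc k))"
    using pq by (simp add: Let_def)
qed

lemma int_cartan_pairs:
  fixes a b :: int
  assumes "a \<le> 0" "b \<le> 0" "a = 0 \<longleftrightarrow> b = 0" "a * b < 4"
  shows "(a, b) \<in> {(0, 0), (-1, -1), (-1, -2), (-2, -1), (-1, -3), (-3, -1)}"
proof (cases "a = 0")
  case False
  then have "a \<le> -1" "b \<le> -1" using assms by auto
  have "(- a) * 1 \<le> (- a) * (- b)" "(- b) * 1 \<le> (- b) * (- a)"
    using \<open>a \<le> -1\<close> \<open>b \<le> -1\<close> by (intro mult_left_mono; simp)+
  then have "a \<in> {-3, -2, -1}" "b \<in> {-3, -2, -1}"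
    using assms(4) \<open>a \<le> -1\<close> \<open>b \<le> -1\<close> by (auto simp: mult.commute)
  then show ?thesis using assms(4) by auto
qed (use assms in simp)

lemma scaleR_double:
  fixes v :: "'a::real_vector"
  shows "(c * 2) *\<^sub>R v = c *\<^sub>R v + c *\<^sub>R v" "(2 * c) *\<^sub>R v = c *\<^sub>R v + c *\<^sub>R v"
  by (simp_all add: scaleR_add_left[symmetric])

context reflection_datum
begin

text \<open>For a word \<open>ks\<close> in \<open>i, j\<close>, \<open>root_coeffs i j (p, q) ks\<close> are the coefficients of
  \<open>(p \<alpha>\<^sub>i + q \<alpha>\<^sub>j) \<circ> wp ks\<close> in terms of \<open>\<alpha>\<^sub>i, \<alpha>\<^sub>j\<close>, and \<open>coroot_coeffs i j x ks\<close> those of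
  \<open>wp ks x - x\<close> in terms of \<open>cv i, cv j\<close>.\<close>

fun root_coeffs :: "'i \<Rightarrow> 'i \<Rightarrow> real \<times> real \<Rightarrow> 'i list \<Rightarrow> real \<times> real" where
  "root_coeffs i j pq [] = pq"
| "root_coeffs i j (p, q) (k # ks) = root_coeffs i j
    (if k = i then (- p - q * \<alpha> j (cv i), q) else (p, - q - p * \<alpha> i (cv j))) ks"

lemma root_coeffs_correct:
  assumes "i \<noteq> j" "set ks \<subseteq> {i, j}"
  shows "p * \<alpha> i (wp ks x) + q * \<alpha> j (wp ks x)
    = fst (root_coeffs i j (p, q) ks) * \<alpha> i x + snd (root_coeffs i j (p, q) ks) * \<alpha> j x"
  using assms(2)
proof (induction ks arbitrary: p q)
  case (Cons k ks)
  then have k: "k = i \<or> k = j" and ks: "set ks \<subseteq> {i, j}" by auto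
  define pq' where "pq' = (if k = i then (- p - q * \<alpha> j (cv i), q) else (p, - q - p * \<alpha> i (cv j)))"
  have "p * \<alpha> i (wp (k # ks) x) + q * \<alpha> j (wp (k # ks) x)
      = fst pq' * \<alpha> i (wp ks x) + snd pq' * \<alpha> j (wp ks x)"
    using k assms(1) unfolding pq'_def by (auto simp: alpha_sref alpha_coroot_self algebra_simps)
  also have "\<dots> = fst (root_coeffs i j pq' ks) * \<alpha> i x + snd (root_coeffs i j pq' ks) * \<alpha> j x"
    using Cons.IH[OF ks, of "fst pq'" "snd pq'"] by simp
  finally show ?case unfolding pq'_def by simp
qed simp

fun coroot_coeffs :: "'i \<Rightarrow> 'i \<Rightarrow> 'a \<Rightarrow> 'i list \<Rightarrow> real \<times> real" where
  "coroot_coeffs i j x [] = (0, 0)"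
| "coroot_coeffs i j x (k # ks) = (let (p, q) = coroot_coeffs i j x ks in
     if k = i then (- p - \<alpha> i x - q * \<alpha> i (cv j), q) else (p, - q - \<alpha> j x - p * \<alpha> j (cv i)))"

lemma coroot_coeffs_correct:
  assumes "i \<noteq> j" "set ks \<subseteq> {i, j}"
  shows "wp ks x = x + fst (coroot_coeffs i j x ks) *\<^sub>R cv i + snd (coroot_coeffs i j x ks) *\<^sub>R cv j"
  using assms(2)
proof (induction ks)
  case (Cons k ks)
  then have k: "k = i \<or> k = j" and ks: "set ks \<subseteq> {i, j}" by auto
  obtain p q where pq: "coroot_coeffs i j x ks = (p, q)" by fastforce
  have IH: "wp ks x = x + p *\<^sub>R cv i + q *\<^sub>R cv j" using Cons.IH[OF ks] pq by simp
  show ?case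
  proof (cases "k = i")
    case True
    then show ?thesis using IH pq by (simp add: sref_def alpha_add alpha_scale alpha_coroot_self algebra_simps scaleR_double)
  next
    case False
    then show ?thesis using k IH pq assms(1)
      by (simp add: sref_def alpha_add alpha_scale alpha_coroot_self algebra_simps scaleR_double)
  qed
qed simp

lemma braid_if_coroot_coeffs_eq:
  assumes "i \<noteq> j" "\<And>x. coroot_coeffs i j x (alt_word i j m) = coroot_coeffs i j x (alt_word j i m)"
  shows "wp (alt_word i j m) = wp (alt_word j i m)"
proof
  fix x
  have "set (alt_word i j m) \<subseteq> {i, j}" "set (alt_word j i m) \<subseteq> {i, j}"
    using set_alt_word[of i j m] set_alt_word[of j i m] by auto
  then show "wp (alt_word i j m) x = wp (alt_word j i m) x"
    by (simp only: coroot_coeffs_correct[OF assms(1)] assms(2))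
qed

lemma wp_rotation_coroot:
  "wp (concat (replicate k [i, j])) (cv i)
    = fst (rotation_coeffs (\<alpha> i (cv j)) (\<alpha> j (cv i)) k) *\<^sub>R cv i
    + snd (rotation_coeffs (\<alpha> i (cv j)) (\<alpha> j (cv i)) k) *\<^sub>R cv j"
proof (induction k)
  case (Suc k)
  obtain p q where "rotation_coeffs (\<alpha> i (cv j)) (\<alpha> j (cv i)) k = (p, q)" by fastforce
  with Suc show ?case
    by (simp add: sref_def alpha_add alpha_diff alpha_scale alpha_coroot_self
        algebra_simps scaleR_double)
qed simp

end

locale finite_cartan = reflection_datum \<alpha> cv
  for \<alpha> :: "'i::finite \<Rightarrow> 'a::euclidean_space \<Rightarrow> real" and cv :: "'i \<Rightarrow> 'a" +
  assumes cartan: "cartan_datum \<alpha> cv" and finite_weyl: "finite (weyl_group \<alpha> cv)"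
begin

lemma alpha_coroot_off_diag: "i \<noteq> j \<Longrightarrow> \<alpha> i (cv j) \<in> \<int> \<and> \<alpha> i (cv j) \<le> 0"
  using cartan by (simp add: cartan_datum_def)

lemma alpha_coroot_eq_0_sym: "\<alpha> i (cv j) = 0 \<longleftrightarrow> \<alpha> j (cv i) = 0"
  using cartan by (simp add: cartan_datum_def)

lemma coroot_coeff_unique:
  assumes "i \<noteq> j" "p *\<^sub>R cv i + q *\<^sub>R cv j = p' *\<^sub>R cv i + q' *\<^sub>R cv j"
  shows "q = q'"
proof (rule ccontr)
  assume "q \<noteq> q'"
  from assms(2) have "(q - q') *\<^sub>R cv j = (p' - p) *\<^sub>R cv i"
    by (simp add: algebra_simps)
  then have "cv j = ((p' - p) / (q - q')) *\<^sub>R cv i"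
    using \<open>q \<noteq> q'\<close> by (metis (no_types) divide_inverse_commute scaleR_scaleR
        inverse_eq_divide right_inverse_eq scaleR_one right_minus_eq)
  moreover have "cv i \<in> range cv - {cv j}"
    using cartan assms(1) by (auto simp: cartan_datum_def dest: injD)
  ultimately have "dependent (range cv)"
    unfolding dependent_def by (metis rangeI span_base span_scale)
  then show False using cartan by (simp add: cartan_datum_def)
qed

text \<open>Otherwise the rotations \<open>(s\<^sub>i s\<^sub>j)\<^sup>k\<close> would be pairwise distinct elements of the finite
  Weyl group.\<close>

lemma cartan_product_less_4:
  assumes "i \<noteq> j"
  shows "\<alpha> i (cv j) * \<alpha> j (cv i) < 4"
proof (rule ccontr)
  assume ge: "\<not> ?thesis"
  let ?A = "\<alpha> i (cv j)" and ?B = "\<alpha> j (cv i)"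
  let ?f = "\<lambda>k. wp (concat (replicate k [i, j]))"
  have mono: "strict_mono (\<lambda>k. snd (rotation_coeffs ?A ?B k))"
    using assms ge alpha_coroot_off_diag[of i j] alpha_coroot_off_diag[of j i]
    by (intro strict_mono_snd_rotation_coeffs) auto
  have "inj ?f"
  proof (rule injI)
    fix k1 k2 assume "?f k1 = ?f k2"
    then have "snd (rotation_coeffs ?A ?B k1) = snd (rotation_coeffs ?A ?B k2)"
      using coroot_coeff_unique[OF assms] by (metis wp_rotation_coroot)
    then show "k1 = k2" using mono strict_mono_eq by blast
  qed
  then have "infinite (range ?f)" by (rule range_inj_infinite)
  moreover have "range ?f \<subseteq> weyl_group \<alpha> cv" by (auto simp: weyl_group_def)
  ultimately show False using finite_weyl finite_subset by blast
qed

lemma rank2_cartan_cases: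
  assumes "i \<noteq> j"
  obtains "\<alpha> i (cv j) = 0" "\<alpha> j (cv i) = 0"
  | "\<alpha> i (cv j) = -1" "\<alpha> j (cv i) = -1"
  | "\<alpha> i (cv j) = -1" "\<alpha> j (cv i) = -2"
  | "\<alpha> i (cv j) = -2" "\<alpha> j (cv i) = -1"
  | "\<alpha> i (cv j) = -1" "\<alpha> j (cv i) = -3"
  | "\<alpha> i (cv j) = -3" "\<alpha> j (cv i) = -1"
proof -
  obtain a where a: "\<alpha> i (cv j) = of_int a"
    using alpha_coroot_off_diag[OF assms] Ints_cases by blast
  obtain b where b: "\<alpha> j (cv i) = of_int b"
    using alpha_coroot_off_diag[of j i] assms Ints_cases by metis
  have "(a, b) \<in> {(0, 0), (-1, -1), (-1, -2), (-2, -1), (-1, -3), (-3, -1)}"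
  proof (rule int_cartan_pairs)
    show "a \<le> 0" "b \<le> 0"
      using alpha_coroot_off_diag[of i j] alpha_coroot_off_diag[of j i] assms a b by auto
    show "a = 0 \<longleftrightarrow> b = 0" using alpha_coroot_eq_0_sym[of i j] a b by simp
    have "of_int (a * b) < (4::real)" using cartan_product_less_4[OF assms] a b by simp
    then show "a * b < 4" by linarith
  qed
  then show ?thesis using that a b by auto
qed

text \<open>\<open>m \<in> {2, 3, 4, 6}\<close> is the order of \<open>s\<^sub>i s\<^sub>j\<close>; the roots \<open>\<alpha>\<^sub>j \<circ> wp (alt_word i j k)\<close>
  for \<open>k < m\<close> are nonnegative combinations of \<open>\<alpha>\<^sub>i\<close> and \<open>\<alpha>\<^sub>j\<close>.\<close>

lemma braid_relation:
  assumes ij: "i \<noteq> j"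
  shows "\<exists>m>0. wp (alt_word i j m) = wp (alt_word j i m) \<and>
     (\<forall>k<m. 0 \<le> fst (root_coeffs i j (0, 1) (alt_word i j k)) \<and>
       0 \<le> snd (root_coeffs i j (0, 1) (alt_word i j k)))"
proof -
  have ji: "j \<noteq> i" using ij by simp
  show ?thesis
  proof (cases rule: rank2_cartan_cases[OF ij])
    case 1
    show ?thesis
      by (rule exI[of _ 2], intro conjI braid_if_coroot_coeffs_eq ij)
         (simp_all add: numeral_eq_Suc Let_def ij ji 1 All_less_Suc)
  next
    case 2
    show ?thesis
      by (rule exI[of _ 3], intro conjI braid_if_coroot_coeffs_eq ij)
         (simp_all add: numeral_eq_Suc Let_def ij ji 2 All_less_Suc algebra_simps)
  next
    case 3
    show ?thesis
      by (rule exI[of _ 4], intro conjI braid_if_coroot_coeffs_eq ij)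
         (simp_all add: numeral_eq_Suc Let_def ij ji 3 All_less_Suc algebra_simps)
  next
    case 4
    show ?thesis
      by (rule exI[of _ 4], intro conjI braid_if_coroot_coeffs_eq ij)
         (simp_all add: numeral_eq_Suc Let_def ij ji 4 All_less_Suc algebra_simps)
  next
    case 5
    show ?thesis
      by (rule exI[of _ 6], intro conjI braid_if_coroot_coeffs_eq ij)
         (simp_all add: numeral_eq_Suc Let_def ij ji 5 All_less_Suc algebra_simps)
  next
    case 6
    show ?thesis
      by (rule exI[of _ 6], intro conjI braid_if_coroot_coeffs_eq ij)
         (simp_all add: numeral_eq_Suc Let_def ij ji 6 All_less_Suc algebra_simps)
  qed
qed

lemma minimal_dihedral_word_alternating:
  assumes ij: "i \<noteq> j" and xs: "set xs \<subseteq> {i, j}"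
    and min1: "\<And>zs. set zs \<subseteq> {i, j} \<Longrightarrow> wp zs = wp xs \<Longrightarrow> length xs \<le> length zs"
    and min2: "\<And>zs. set zs \<subseteq> {i, j} \<Longrightarrow> wp zs = s j \<circ> wp xs \<Longrightarrow> length xs \<le> length zs"
  shows "xs = alt_word i j (length xs)"
proof (rule alt_word_if_successively_neq[OF xs])
  show "successively (\<noteq>) xs"
    unfolding successively_conv_nth
  proof (intro allI impI notI)
    fix k assume k: "Suc k < length xs" and eq: "xs ! k = xs ! Suc k"
    define zs where "zs = take k xs @ drop (Suc (Suc k)) xs"
    have "xs = take k xs @ [xs ! k, xs ! Suc k] @ drop (Suc (Suc k)) xs"
      using k by (simp add: Cons_nth_drop_Suc)
    then have "wp xs = wp (take k xs @ [xs ! k, xs ! k] @ drop (Suc (Suc k)) xs)"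
      unfolding eq by (rule arg_cong)
    also have "\<dots> = wp zs" unfolding zs_def by (simp add: wp_append)
    finally have "wp xs = wp zs" .
    moreover have "set zs \<subseteq> {i, j}"
      using xs set_drop_subset[of "Suc (Suc k)" xs] set_take_subset[of k xs] unfolding zs_def by auto
    ultimately show False using min1[of zs] k unfolding zs_def by simp
  qed
  show "xs \<noteq> [] \<longrightarrow> hd xs = i"
  proof (cases xs)
    case (Cons x ys)
    have "x \<noteq> j"
    proof
      assume "x = j"
      then have "wp ys = s j \<circ> wp xs" using Cons by simp
      then show False using min2[of ys] xs Cons by simp
    qed
    then show ?thesis using xs Cons by simp
  qed simp
qed

lemma minimal_dihedral_word_root_nonneg:
  assumes ij: "i \<noteq> j" and xs: "set xs \<subseteq> {i, j}"
    and min1: "\<And>zs. set zs \<subseteq> {i, j} \<Longrightarrow> wp zs = wp xs \<Longrightarrow> length xs \<le> length zs"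
    and min2: "\<And>zs. set zs \<subseteq> {i, j} \<Longrightarrow> wp zs = s j \<circ> wp xs \<Longrightarrow> length xs \<le> length zs"
  shows "\<exists>a b. 0 \<le> a \<and> 0 \<le> b \<and> (\<forall>x. \<alpha> j (wp xs x) = b * \<alpha> i x + a * \<alpha> j x)"
proof -
  obtain m where m: "0 < m" and braid: "wp (alt_word i j m) = wp (alt_word j i m)"
    and nonneg: "\<forall>k<m. 0 \<le> fst (root_coeffs i j (0, 1) (alt_word i j k)) \<and>
       0 \<le> snd (root_coeffs i j (0, 1) (alt_word i j k))"
    using braid_relation[OF ij] by blast
  have alt: "xs = alt_word i j (length xs)"
    by (rule minimal_dihedral_word_alternating[OF ij xs min1 min2])
  have "length xs < m"
  proof (rule ccontr)
    assume "\<not> length xs < m"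
    then have "take m xs = alt_word i j m" by (subst alt) (simp add: take_alt_word)
    moreover have "wp xs = wp (take m xs) \<circ> wp (drop m xs)" by (simp flip: wp_append)
    ultimately have "wp (alt_word j i m @ drop m xs) = wp xs" by (simp add: wp_append braid)
    moreover obtain zs where zs: "alt_word j i m @ drop m xs = j # zs"
      using m by (cases m) auto
    ultimately have "s j \<circ> wp zs = wp xs" by simp
    then have "wp zs = s j \<circ> wp xs" by (simp add: sref_comp_eq_iff)
    moreover have "set (j # zs) \<subseteq> {i, j}"
      using set_alt_word[of j i m] xs set_drop_subset[of m xs] unfolding zs[symmetric] by auto
    then have "set zs \<subseteq> {i, j}" by simp
    moreover have "length zs < length xs"
      using arg_cong[OF zs, of length] \<open>\<not> length xs < m\<close> by simp
    ultimately show False using min2 by fastforce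
  qed
  moreover have "\<alpha> j (wp xs x) = fst (root_coeffs i j (0, 1) xs) * \<alpha> i x
      + snd (root_coeffs i j (0, 1) xs) * \<alpha> j x" for x
    using root_coeffs_correct[OF ij xs, where p=0 and q=1] by simp
  ultimately show ?thesis using nonneg alt by (metis (no_types, lifting))
qed

section \<open>Positive roots\<close>

definition nonneg_root_comb :: "('a \<Rightarrow> real) \<Rightarrow> bool" where
  "nonneg_root_comb f \<longleftrightarrow> (\<exists>c. (\<forall>i. 0 \<le> c i) \<and> (\<forall>x. f x = (\<Sum>i\<in>UNIV. c i * \<alpha> i x)))"

lemma nonneg_root_comb_alpha: "nonneg_root_comb (\<alpha> j)"
  unfolding nonneg_root_comb_def
  by (intro exI[of _ "\<lambda>i. if i = j then 1 else 0"]) (simp add: if_distrib[where f="\<lambda>c. c * _"] cong: if_cong)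

lemma nonneg_root_comb_add:
  assumes "nonneg_root_comb f" "nonneg_root_comb g" "0 \<le> a" "0 \<le> b"
  shows "nonneg_root_comb (\<lambda>x. a * f x + b * g x)"
proof -
  obtain c d where "\<forall>i. 0 \<le> c i" "\<forall>x. f x = (\<Sum>i\<in>UNIV. c i * \<alpha> i x)"
    "\<forall>i. 0 \<le> d i" "\<forall>x. g x = (\<Sum>i\<in>UNIV. d i * \<alpha> i x)"
    using assms(1,2) unfolding nonneg_root_comb_def by blast
  then show ?thesis
    unfolding nonneg_root_comb_def using assms(3,4)
    by (intro exI[of _ "\<lambda>i. a * c i + b * d i"])
       (simp add: sum_distrib_left sum.distrib algebra_simps)
qed

lemma minimal_dihedral_factorization:
  assumes w: "wp (i # ws) = w" "length (i # ws) = wl w"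
  obtains xs ys where "set xs \<subseteq> {i, j}" "wp xs \<circ> wp ys = w" "length xs + length ys = wl w"
    "length ys < wl w" "wl (wp ys) = length ys" "\<And>l. l \<in> {i, j} \<Longrightarrow> length ys \<le> wl (wp (l # ys))"
proof -
  define F where "F = (\<lambda>(xs, ys). set xs \<subseteq> {i, j} \<and> wp xs \<circ> wp ys = w \<and> length xs + length ys = wl w)"
  have "F ([i], ws)" unfolding F_def using w by auto
  then obtain xs ys where F: "F (xs, ys)"
    and least: "\<And>xs' ys'. F (xs', ys') \<Longrightarrow> length ys \<le> length ys'"
    using ex_has_least_nat[of F "([i], ws)" "length \<circ> snd"] by fastforce
  have xs: "set xs \<subseteq> {i, j}" and xy: "wp xs \<circ> wp ys = w" and len: "length xs + length ys = wl w"
    using F unfolding F_def by auto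
  have lower: "wl w \<le> length zs" if "wp zs = w" for zs using wl_le_length[OF that] .
  show thesis
  proof (rule that[OF xs xy len])
    show "length ys < wl w" using least[of "[i]" ws] \<open>F ([i], ws)\<close> w by simp
    obtain ys' where ys': "length ys' = wl (wp ys)" "wp ys' = wp ys" by (rule wl_attained)
    then have "wl w \<le> length (xs @ ys')" using xy by (intro lower) (simp add: wp_append)
    then show "wl (wp ys) = length ys" using ys' wl_le_length[of ys] len by simp
  next
    fix l assume l: "l \<in> {i, j}"
    show "length ys \<le> wl (wp (l # ys))"
    proof (rule ccontr)
      assume short: "\<not> ?thesis"
      obtain zs where zs: "length zs = wl (wp (l # ys))" "wp zs = s l \<circ> wp ys"
        using wl_attained[of "l # ys"] by auto
      have "wp (xs @ [l]) \<circ> wp zs = w" using xy zs(2) by (simp add: wp_append comp_assoc)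
      moreover from this have "wl w \<le> length ((xs @ [l]) @ zs)"
        by (intro lower) (simp add: wp_append comp_assoc)
      ultimately have "F (xs @ [l], zs)" unfolding F_def using xs l len short zs(1) by auto
      then show False using least short zs(1) by fastforce
    qed
  qed
qed

text \<open>The proof reduces to the
  rank-two case by factoring \<open>w = x y\<close> with \<open>x\<close> in the parabolic subgroup of \<open>{i, j}\<close>, where \<open>i\<close>
  starts a reduced word of \<open>w\<close>, and \<open>y\<close> as short as possible.\<close>

lemma nonneg_root_comb_if_wl_le:
  "wl (wp ws) \<le> wl (wp (j # ws)) \<Longrightarrow> nonneg_root_comb (\<lambda>x. \<alpha> j (wp ws x))"
proof (induction "wl (wp ws)" arbitrary: ws j rule: less_induct)
  case less
  obtain ws0 where ws0: "length ws0 = wl (wp ws)" "wp ws0 = wp ws" by (rule wl_attained)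
  show ?case
  proof (cases ws0)
    case Nil
    then show ?thesis using ws0 nonneg_root_comb_alpha[of j] by (simp add: comp_def)
  next
    case (Cons i ws1)
    have "i \<noteq> j"
    proof
      assume "i = j"
      then have "wp (j # ws) = wp ws1" using ws0 Cons by (auto simp: sref_comp_eq_iff)
      then show False using wl_le_length[of ws1] less.prems ws0 Cons by simp
    qed
    obtain xs ys where xs: "set xs \<subseteq> {i, j}" and xy: "wp xs \<circ> wp ys = wp ws"
      and len: "length xs + length ys = wl (wp ws)" and shorter: "length ys < wl (wp ws)"
      and ys: "wl (wp ys) = length ys" "\<And>l. l \<in> {i, j} \<Longrightarrow> length ys \<le> wl (wp (l # ys))"
      using minimal_dihedral_factorization[of i ws1 "wp ws" j] ws0 Cons by auto
    have comb_ys: "nonneg_root_comb (\<lambda>x. \<alpha> l (wp ys x))" if "l \<in> {i, j}" for l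
      using less.hyps[of ys] shorter ys that by auto
    have "length xs \<le> length zs" if "set zs \<subseteq> {i, j}" "wp zs = wp xs" for zs
      using wl_le_length[of "zs @ ys" "wp ws"] that xy len by (simp add: wp_append)
    moreover have "length xs \<le> length zs" if "set zs \<subseteq> {i, j}" "wp zs = s j \<circ> wp xs" for zs
      using wl_le_length[of "zs @ ys" "wp (j # ws)"] that xy len less.prems
      by (simp add: wp_append comp_assoc)
    ultimately obtain a b where ab: "0 \<le> a" "0 \<le> b"
      "\<forall>x. \<alpha> j (wp xs x) = b * \<alpha> i x + a * \<alpha> j x"
      using minimal_dihedral_word_root_nonneg[OF \<open>i \<noteq> j\<close> xs] by blast
    have "\<alpha> j (wp ws x) = b * \<alpha> i (wp ys x) + a * \<alpha> j (wp ys x)" for x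
      using ab(3) xy by (metis comp_apply)
    then show ?thesis
      using nonneg_root_comb_add[OF comb_ys comb_ys ab(2,1)] by (simp add: comp_def)
  qed
qed

lemma ex_rho: "\<exists>\<rho>. \<forall>i. \<alpha> i \<rho> = 1"
proof (rule ccontr)
  assume no_rho: "\<nexists>\<rho>. \<forall>i. \<alpha> i \<rho> = 1"
  define L where "L x = (\<chi> i. \<alpha> i x)" for x
  have "linear L"
    by (rule linearI) (simp_all add: L_def vec_eq_iff alpha_add alpha_scale)
  then have span_L: "span (range L) = range L"
    using linear_subspace_image[of L UNIV] span_eq_iff by auto
  have "(\<chi> i. 1) \<notin> range L" using no_rho by (fastforce simp: L_def vec_eq_iff)
  then have "span (range L) \<subset> span UNIV" unfolding span_L span_UNIV by auto
  then obtain c :: "real^'i" where c: "c \<noteq> 0" "\<And>y. y \<in> span (range L) \<Longrightarrow> orthogonal c y"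
    by (rule orthogonal_to_subspace_exists_gen) blast
  have "(\<Sum>i\<in>UNIV. c $ i * \<alpha> i x) = 0" for x
    using c(2)[OF span_base[OF rangeI[of L x]]]
    by (simp add: orthogonal_def inner_vec_def L_def)
  then have "\<forall>i. c $ i = 0" using cartan unfolding cartan_datum_def by blast
  then show False using c(1) by (simp add: vec_eq_iff)
qed

text \<open>Since \<open>ws\<close> is reduced, Tits' lemma makes \<open>\<alpha>\<^sub>j \<circ> wp (rev (take k ws))\<close>, \<open>j = ws ! k\<close>, a
  positive root; a nonzero one, so positive at \<open>\<rho>\<close>.\<close>

lemma alpha_rho_reduced_prefix_pos:
  assumes red: "length ws = wl (wp ws)" and k: "k < length ws" and rho: "\<forall>i. \<alpha> i \<rho> = 1"
  shows "0 < \<alpha> (ws ! k) (wp (rev (take k ws)) \<rho>)"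
proof -
  let ?u = "wp (rev (take k ws))" and ?j = "ws ! k"
  have "?j # rev (take k ws) = rev (take (Suc k) ws)" using k by (simp add: take_Suc_conv_app_nth)
  then have "wl (wp (?j # rev (take k ws))) = Suc k"
    using wl_rev[of "take (Suc k) ws"] wl_take_reduced[OF red] k by simp
  moreover have "wl ?u \<le> k" using wl_rev[of "take k ws"] wl_le_length[of "take k ws"] k by simp
  ultimately obtain c where c: "\<forall>i. 0 \<le> c i" "\<forall>x. \<alpha> ?j (?u x) = (\<Sum>i\<in>UNIV. c i * \<alpha> i x)"
    using nonneg_root_comb_if_wl_le[of "rev (take k ws)" ?j] unfolding nonneg_root_comb_def by auto
  have "c \<noteq> (\<lambda>_. 0)"
  proof
    assume "c = (\<lambda>_. 0)"
    then have "\<alpha> ?j (?u (wp (take k ws) (cv ?j))) = 0"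
      using c(2)[rule_format, of "wp (take k ws) (cv ?j)"] by (simp del: wp_rev_wp)
    then show False using alpha_coroot_self[of ?j] by simp
  qed
  then have "0 < (\<Sum>i\<in>UNIV. c i)"
    using c(1) sum_nonneg_eq_0_iff[of UNIV c] by (force intro: sum_nonneg order.not_eq_order_implies_strict)
  then show ?thesis using c(2) rho by simp
qed

section \<open>Iterated paths\<close>

lemma epath_prefix_log_growth:
  assumes T: "0 < T" and red: "length ws = wl (wp ws)" and rho: "\<forall>i. \<alpha> i \<rho> = 1"
    and cont: "continuous_on {0..T} \<pi>" and k: "k \<le> length ws"
  shows "continuous_on {0..<T} (epath \<alpha> cv T (take k ws) \<pi>) \<and>
    log_growth T (\<rho> - wp (rev (take k ws)) \<rho>) (epath \<alpha> cv T (take k ws) \<pi>)"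
  using k
proof (induction k)
  case 0
  obtain B where "\<forall>t\<in>{0..T}. norm (\<pi> t) \<le> B"
    using compact_imp_bounded[OF compact_continuous_image[OF cont]] by (auto simp: bounded_iff)
  moreover have "continuous_on {0..<T} \<pi>" using cont by (rule continuous_on_subset) auto
  ultimately show ?case by (auto simp: epath_def log_growth_def intro!: exI[of _ B])
next
  case (Suc k)
  define j where "j = ws ! k"
  define u where "u = wp (rev (take k ws))"
  have IH: "continuous_on {0..<T} (epath \<alpha> cv T (take k ws) \<pi>)"
    "log_growth T (\<rho> - u \<rho>) (epath \<alpha> cv T (take k ws) \<pi>)"
    using Suc unfolding u_def by auto
  have "\<alpha> j (\<rho> - u \<rho>) < 1"
    using alpha_rho_reduced_prefix_pos[OF red _ rho, of k] Suc.prems rho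
    unfolding j_def u_def by (simp add: alpha_diff)
  from eminf_log_growth[where \<alpha>=\<alpha> and j=j and cv=cv, OF T linear_alpha IH this]
  have "continuous_on {0..<T} (eminf \<alpha> cv T j (epath \<alpha> cv T (take k ws) \<pi>))"
    "log_growth T ((\<rho> - u \<rho>) + (1 - \<alpha> j (\<rho> - u \<rho>)) *\<^sub>R cv j)
      (eminf \<alpha> cv T j (epath \<alpha> cv T (take k ws) \<pi>))"
    by auto
  moreover have "take (Suc k) ws = take k ws @ [j]"
    unfolding j_def using Suc.prems by (simp add: take_Suc_conv_app_nth)
  moreover have "(\<rho> - u \<rho>) + (1 - \<alpha> j (\<rho> - u \<rho>)) *\<^sub>R cv j = \<rho> - s j (u \<rho>)"
    using rho by (simp add: sref_def alpha_diff algebra_simps)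
  ultimately show ?case unfolding u_def by (simp add: epath_def)
qed

lemma Dk_finite:
  assumes T: "0 < T" and red: "length ws = wl (wp ws)" and rho: "\<forall>i. \<alpha> i \<rho> = 1"
    and cont: "continuous_on {0..T} \<pi>" and k: "k < length ws"
  shows "\<exists>D>0. Dk \<alpha> cv T ws \<pi> k = ennreal D \<and>
    (\<forall>t\<in>{0..<T}. integral {0..t} (\<lambda>s. exp (- \<alpha> (ws ! k) (epath \<alpha> cv T (take k ws) \<pi> s))) < D) \<and>
    continuous_on {0..<T} (epath \<alpha> cv T (take k ws) \<pi>)"
proof -
  have "\<alpha> (ws ! k) (\<rho> - wp (rev (take k ws)) \<rho>) < 1"
    using alpha_rho_reduced_prefix_pos[OF red k rho] rho by (simp add: alpha_diff)
  then show ?thesis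
    using epath_prefix_log_growth[OF T red rho cont, of k] k
      eminf_log_growth[where \<alpha>=\<alpha> and j="ws ! k" and cv=cv and p="epath \<alpha> cv T (take k ws) \<pi>",
        OF T linear_alpha]
    unfolding Dk_def by auto
qed

lemma epath_prefixes_eq:
  assumes T: "0 < T" and red: "length ws = wl (wp ws)" and rho: "\<forall>i. \<alpha> i \<rho> = 1"
    and cont: "continuous_on {0..T} \<pi>" and cont': "continuous_on {0..T} \<pi>'"
    and rhoL: "rhoL \<alpha> cv T ws \<pi> = rhoL \<alpha> cv T ws \<pi>'"
    and eq: "\<forall>t\<in>{0..<T}. epath \<alpha> cv T ws \<pi> t = epath \<alpha> cv T ws \<pi>' t"
    and k: "k \<le> length ws"
  shows "\<forall>t\<in>{0..<T}. epath \<alpha> cv T (take k ws) \<pi> t = epath \<alpha> cv T (take k ws) \<pi>' t"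
  using k
proof (induction rule: inc_induct)
  case base
  then show ?case using eq by simp
next
  case (step k)
  obtain D where D: "0 < D" "Dk \<alpha> cv T ws \<pi> k = ennreal D"
    "\<forall>t\<in>{0..<T}. integral {0..t} (\<lambda>s. exp (- \<alpha> (ws ! k) (epath \<alpha> cv T (take k ws) \<pi> s))) < D"
    "continuous_on {0..<T} (epath \<alpha> cv T (take k ws) \<pi>)"
    using Dk_finite[OF T red rho cont step.hyps(2)] by blast
  obtain D' where D': "0 < D'" "Dk \<alpha> cv T ws \<pi>' k = ennreal D'"
    "\<forall>t\<in>{0..<T}. integral {0..t} (\<lambda>s. exp (- \<alpha> (ws ! k) (epath \<alpha> cv T (take k ws) \<pi>' s))) < D'"
    "continuous_on {0..<T} (epath \<alpha> cv T (take k ws) \<pi>')"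
    using Dk_finite[OF T red rho cont' step.hyps(2)] by blast
  have "1 / D = 1 / D'"
    using arg_cong[OF rhoL, of "\<lambda>xs. xs ! k"] step.hyps(2) D(1,2) D'(1,2) by (simp add: rhoL_def)
  then have "D' = D" using D(1) D'(1) by simp
  moreover have "take (Suc k) ws = take k ws @ [ws ! k]"
    using step.hyps(2) by (simp add: take_Suc_conv_app_nth)
  then have "\<forall>t\<in>{0..<T}. eminf \<alpha> cv T (ws ! k) (epath \<alpha> cv T (take k ws) \<pi>) t
      = eminf \<alpha> cv T (ws ! k) (epath \<alpha> cv T (take k ws) \<pi>') t"
    using step.IH by (simp add: epath_def)
  ultimately show ?case
    using D D' unfolding Dk_def
    by (intro eminf_eq_imp_eq[where \<alpha>=\<alpha> and j="ws ! k" and cv=cv,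
        OF linear_alpha alpha_coroot_self D(4) D'(4) D(1)]) simp_all
qed

lemma Dk_rhoL_pos:
  assumes T: "0 < T" and red: "length ws = wl (wp ws)" and rho: "\<forall>i. \<alpha> i \<rho> = 1"
    and cont: "continuous_on {0..T} \<pi>"
  shows "\<forall>k<length ws. 0 < Dk \<alpha> cv T ws \<pi> k \<and> Dk \<alpha> cv T ws \<pi> k < \<infinity>"
    and "\<forall>x\<in>set (rhoL \<alpha> cv T ws \<pi>). 0 < x"
  using Dk_finite[OF T red rho cont] by (force simp: rhoL_def)+

lemma eq_if_rhoL_eq_epath_eq:
  assumes T: "0 < T" and red: "length ws = wl (wp ws)" and rho: "\<forall>i. \<alpha> i \<rho> = 1"
    and cont: "continuous_on {0..T} \<pi>" and cont': "continuous_on {0..T} \<pi>'"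
    and rhoL: "rhoL \<alpha> cv T ws \<pi> = rhoL \<alpha> cv T ws \<pi>'"
    and eq: "\<forall>t\<in>{0..<T}. epath \<alpha> cv T ws \<pi> t = epath \<alpha> cv T ws \<pi>' t"
  shows "\<forall>t\<in>{0..T}. \<pi> t = \<pi>' t"
proof
  fix t assume t: "t \<in> {0..T}"
  have "\<pi> s - \<pi>' s = 0" if "s \<in> {0..<T}" for s
    using epath_prefixes_eq[OF T red rho cont cont' rhoL eq, of 0] that by (simp add: epath_def)
  moreover have "continuous_on (closure {0..<T}) (\<lambda>s. \<pi> s - \<pi>' s)"
    using cont cont' T by (simp add: continuous_on_diff)
  ultimately show "\<pi> t = \<pi>' t"
    using continuous_constant_on_closure[of "{0..<T}" "\<lambda>s. \<pi> s - \<pi>' s" 0 t] T t by simp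
qed

end

theorem mainTheorem13:
  fixes \<alpha> :: "'i::finite \<Rightarrow> 'a::euclidean_space \<Rightarrow> real" and cv :: "'i \<Rightarrow> 'a"
    and T :: real and "is" :: "'i list"
  assumes "cartan_datum \<alpha> cv"
    and "finite (weyl_group \<alpha> cv)"
    and "T > 0"
    and "reduced_word_w0 \<alpha> cv is"
  shows "(\<forall>\<pi>::real \<Rightarrow> 'a. continuous_on {0..T} \<pi> \<and> \<pi> 0 = 0 \<longrightarrow>
            (\<forall>k<length is. 0 < Dk \<alpha> cv T is \<pi> k \<and> Dk \<alpha> cv T is \<pi> k < \<infinity>) \<and>
            (\<forall>x\<in>set (rhoL \<alpha> cv T is \<pi>). x > 0))
       \<and> (\<forall>\<pi> \<pi>'::real \<Rightarrow> 'a.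
            continuous_on {0..T} \<pi> \<and> \<pi> 0 = 0 \<and> continuous_on {0..T} \<pi>' \<and> \<pi>' 0 = 0 \<and>
            rhoL \<alpha> cv T is \<pi> = rhoL \<alpha> cv T is \<pi>' \<and>
            (\<forall>t\<in>{0..<T}. epath \<alpha> cv T is \<pi> t = epath \<alpha> cv T is \<pi>' t)
            \<longrightarrow> (\<forall>t\<in>{0..T}. \<pi> t = \<pi>' t))"
proof -
  interpret finite_cartan \<alpha> cv
    by (rule finite_cartan.intro[OF reflection_datum.intro finite_cartan_axioms.intro])
       (use assms(1,2) in \<open>simp_all add: cartan_datum_def\<close>)
  obtain \<rho> where rho: "\<forall>i. \<alpha> i \<rho> = 1" using ex_rho by blast
  have red: "length is = wl (wp is)" using assms(4) unfolding reduced_word_w0_def by blast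
  show ?thesis
    using Dk_rhoL_pos[OF assms(3) red rho] eq_if_rhoL_eq_epath_eq[OF assms(3) red rho] by blast
qed

end
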